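(* Let $\mathcal A$ be a Banach algebra such that the ultrapower $(\mathcal A)_{\mathcal U}$ is simple for some non-principal ultrafilter $\mathcal U$ on $\mathbb N$. Then for every Banach algebra $\mathcal B$, every non-zero continuous algebra homomorphism $\psi:\mathcal A\to\mathcal B$ is bounded below, i.e. there is $c>0$ with $\|\psi(a)\|\geqslant c\|a\|$ for all $a\in\mathcal A$.
   Context: For an ultrafilter $\mathcal U$ on $\mathbb N$, the ultrapower is $(\mathcal A)_{\mathcal U}=\ell^\infty(\mathcal A)/c_{\mathcal U}(\mathcal A)$, where $\ell^\infty(\mathcal A)$ is the Banach algebra of bounded sequences in $\mathcal A$ with pointwise operations and sup norm, and $c_{\mathcal U}(\mathcal A)$ is the closed ideal of sequences $(a_n)$ with $\lim_{n\to\mathcal U}\|a_n\|=0$. An algebra is simple if its only two-sided ideals are $\{0\}$ and itself. *)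

theory Defs
  imports "HOL-Analysis.Analysis"
begin

definition is_ultrafilter :: "nat filter \<Rightarrow> bool" where
  "is_ultrafilter U \<longleftrightarrow> U \<noteq> bot \<and> (\<forall>A. eventually (\<lambda>n. n \<in> A) U \<or> eventually (\<lambda>n. n \<notin> A) U)"

definition non_principal :: "nat filter \<Rightarrow> bool" where
  "non_principal U \<longleftrightarrow> (\<forall>k. \<not> eventually (\<lambda>n. n = k) U)"

definition linf :: "(nat \<Rightarrow> 'a::real_normed_vector) set" where
  "linf = {x. bounded (range x)}"

definition cU :: "nat filter \<Rightarrow> (nat \<Rightarrow> 'a::real_normed_vector) set" where
  "cU U = {x \<in> linf. ((\<lambda>n. norm (x n)) \<longlongrightarrow> 0) U}"

definition ucls :: "nat filter \<Rightarrow> (nat \<Rightarrow> 'a::real_normed_vector) \<Rightarrow> (nat \<Rightarrow> 'a) set" where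
  "ucls U x = {y \<in> linf. (\<lambda>n. x n - y n) \<in> cU U}"

definition ultrapower :: "nat filter \<Rightarrow> (nat \<Rightarrow> 'a::real_normed_vector) set set" where
  "ultrapower U = ucls U ` linf"

text \<open>Two-sided (algebra) ideals of the ultrapower; operations on cosets are
  the pointwise ones on representatives.\<close>
definition ultra_ideal :: "nat filter \<Rightarrow> (nat \<Rightarrow> 'a::real_normed_algebra) set set \<Rightarrow> bool" where
  "ultra_ideal U I \<longleftrightarrow>
     I \<subseteq> ultrapower U \<and>
     ucls U (\<lambda>n. 0) \<in> I \<and>
     (\<forall>x\<in>linf. \<forall>y\<in>linf. ucls U x \<in> I \<longrightarrow> ucls U y \<in> I \<longrightarrow> ucls U (\<lambda>n. x n + y n) \<in> I) \<and>
     (\<forall>x\<in>linf. \<forall>c::real. ucls U x \<in> I \<longrightarrow> ucls U (\<lambda>n. c *\<^sub>R x n) \<in> I) \<and>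
     (\<forall>x\<in>linf. \<forall>a\<in>linf. ucls U x \<in> I \<longrightarrow>
        ucls U (\<lambda>n. a n * x n) \<in> I \<and> ucls U (\<lambda>n. x n * a n) \<in> I)"

definition ultrapower_simple :: "nat filter \<Rightarrow> 'a::real_normed_algebra itself \<Rightarrow> bool" where
  "ultrapower_simple U _ \<longleftrightarrow>
     (\<forall>I :: (nat \<Rightarrow> 'a) set set. ultra_ideal U I \<longrightarrow> I = {ucls U (\<lambda>n. 0)} \<or> I = ultrapower U)"

end

theory Submission
  imports Defs
begin

text \<open>A non-zero continuous homomorphism \<open>\<psi>\<close> induces, coordinatewise, a homomorphism between
  the ultrapowers.  Its kernel is a two-sided ideal of \<open>(\<A>)\<^sub>\<U>\<close>, and it is proper because
  constant sequences at a point where \<open>\<psi>\<close> does not vanish stay outside.  Simplicity forces the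
  kernel to be zero.  If \<open>\<psi>\<close> were not bounded below, there would be unit vectors \<open>a\<^sub>n\<close> with
  \<open>\<psi> a\<^sub>n \<rightarrow> 0\<close>; since \<open>\<U>\<close> is non-principal it refines the Frechet filter, so the class of
  \<open>(a\<^sub>n)\<close> lies in the kernel although it has norm one.\<close>

lemma linear_continuous_imp_bounded_linear:
  fixes f :: "'a::real_normed_vector \<Rightarrow> 'b::real_normed_vector"
  assumes lin: "linear f" and cont: "continuous_on UNIV f"
  shows "bounded_linear f"
proof -
  have f0: "f 0 = 0" using lin by (rule linear_0)
  have "isCont f 0" using cont by (simp add: continuous_on_eq_continuous_at)
  then obtain d where d: "d > 0" and small: "\<And>x. norm x < d \<Longrightarrow> norm (f x) < 1"
    unfolding continuous_at_eps_delta by (metis zero_less_one f0 diff_zero dist_norm)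
  have "norm (f x) \<le> norm x * (2 / d)" for x
  proof (cases "x = 0")
    case True then show ?thesis by (simp add: f0)
  next
    case False
    define s where "s = d / (2 * norm x)"
    have s: "s > 0" using False d by (simp add: s_def)
    have "norm (s *\<^sub>R x) < d" using False d by (simp add: s_def)
    then have "norm (f (s *\<^sub>R x)) < 1" by (rule small)
    then have "s * norm (f x) < 1" using s lin by (simp add: linear_scale)
    then have "norm (f x) < 1 / s" using s by (simp add: field_simps)
    also have "1 / s = norm x * (2 / d)" using False d by (simp add: s_def)
    finally show ?thesis by simp
  qed
  then show ?thesis using lin by (blast intro: bounded_linear.intro bounded_linear_axioms.intro)
qed

lemma linf_iff_norm_bounded: "x \<in> linf \<longleftrightarrow> (\<exists>B. \<forall>n. norm (x n) \<le> B)"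
  unfolding linf_def bounded_iff by auto

lemma const_in_linf: "(\<lambda>n. c) \<in> linf"
  by (auto simp: linf_iff_norm_bounded)

lemma linf_add: "x \<in> linf \<Longrightarrow> y \<in> linf \<Longrightarrow> (\<lambda>n. x n + y n) \<in> linf"
  unfolding linf_iff_norm_bounded by (meson add_mono norm_triangle_ineq order_trans)

lemma linf_scaleR: "x \<in> linf \<Longrightarrow> (\<lambda>n. c *\<^sub>R x n) \<in> linf"
  unfolding linf_iff_norm_bounded by (metis abs_ge_zero mult_left_mono norm_scaleR)

lemma linf_mult:
  fixes x y :: "nat \<Rightarrow> 'a::real_normed_algebra"
  shows "x \<in> linf \<Longrightarrow> y \<in> linf \<Longrightarrow> (\<lambda>n. x n * y n) \<in> linf"
  unfolding linf_iff_norm_bounded by (meson mult_mono norm_ge_zero norm_mult_ineq order_trans)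

lemma linf_bounded_linear_image:
  assumes "bounded_linear f" and "x \<in> linf"
  shows "(\<lambda>n. f (x n)) \<in> linf"
proof -
  obtain K where K: "\<And>z. norm (f z) \<le> norm z * K" "K > 0"
    using bounded_linear.pos_bounded[OF assms(1)] by blast
  obtain B where "\<And>n. norm (x n) \<le> B" using assms(2) by (auto simp: linf_iff_norm_bounded)
  then have "norm (f (x n)) \<le> B * K" for n
    using K by (meson mult_right_mono less_imp_le order_trans)
  then show ?thesis by (auto simp: linf_iff_norm_bounded)
qed

lemma linf_imp_Bfun: "x \<in> linf \<Longrightarrow> Bfun x F"
  unfolding linf_iff_norm_bounded by (auto intro: BfunI always_eventually)

lemma in_ucls_self: "x \<in> linf \<Longrightarrow> x \<in> ucls U x"
  by (simp add: ucls_def cU_def const_in_linf)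

lemma ucls_eq_imp_tendsto_diff:
  assumes "x \<in> linf" and "ucls U x = ucls U y"
  shows "((\<lambda>n. y n - x n) \<longlongrightarrow> 0) U"
proof -
  have "x \<in> ucls U y" using assms in_ucls_self by blast
  then show ?thesis by (simp add: ucls_def cU_def tendsto_norm_zero_iff)
qed

lemma nonprincipal_ultrafilter_le_sequentially:
  assumes "is_ultrafilter U" and "non_principal U"
  shows "U \<le> sequentially"
  unfolding le_sequentially
proof
  fix N
  have "eventually (\<lambda>n. n \<notin> {k}) U" for k
  proof -
    have "\<not> eventually (\<lambda>n. n \<in> {k}) U" using assms(2) by (simp add: non_principal_def)
    then show ?thesis using assms(1) unfolding is_ultrafilter_def by blast
  qed
  then have "eventually (\<lambda>n. \<forall>k\<in>{..<N}. n \<noteq> k) U" by (simp add: eventually_ball_finite)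
  then show "eventually (\<lambda>n. N \<le> n) U" by (rule eventually_mono) (auto simp: not_le)
qed

lemma tendsto_zero_mult_Bfun:
  fixes f g :: "'x \<Rightarrow> 'a::real_normed_algebra"
  assumes "Bfun f F" and "(g \<longlongrightarrow> 0) F"
  shows "((\<lambda>x. f x * g x) \<longlongrightarrow> 0) F" and "((\<lambda>x. g x * f x) \<longlongrightarrow> 0) F"
  using assms bounded_bilinear.Bfun_prod_Zfun[OF bounded_bilinear_mult]
    bounded_bilinear.Zfun_prod_Bfun[OF bounded_bilinear_mult]
  by (simp_all add: tendsto_Zfun_iff)

definition ultra_kernel ::
    "nat filter \<Rightarrow> ('a::real_normed_vector \<Rightarrow> 'b::real_normed_vector) \<Rightarrow> (nat \<Rightarrow> 'a) set set" where
  "ultra_kernel U \<psi> = {ucls U x | x. x \<in> linf \<and> ((\<lambda>n. \<psi> (x n)) \<longlongrightarrow> 0) U}"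

lemma ucls_in_ultra_kernel_iff:
  assumes "bounded_linear \<psi>" and "x \<in> linf"
  shows "ucls U x \<in> ultra_kernel U \<psi> \<longleftrightarrow> ((\<lambda>n. \<psi> (x n)) \<longlongrightarrow> 0) U"
proof
  assume "ucls U x \<in> ultra_kernel U \<psi>"
  then obtain y where y: "ucls U y = ucls U x" "((\<lambda>n. \<psi> (y n)) \<longlongrightarrow> 0) U"
    unfolding ultra_kernel_def by auto
  have "((\<lambda>n. y n - x n) \<longlongrightarrow> 0) U"
    using ucls_eq_imp_tendsto_diff[OF assms(2) y(1)[symmetric]] .
  then have "((\<lambda>n. \<psi> (y n - x n)) \<longlongrightarrow> 0) U"
    using bounded_linear.tendsto_zero[OF assms(1)] by blast
  then have "((\<lambda>n. \<psi> (y n) - \<psi> (y n - x n)) \<longlongrightarrow> 0 - 0) U"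
    using y(2) by (intro tendsto_diff)
  then show "((\<lambda>n. \<psi> (x n)) \<longlongrightarrow> 0) U"
    by (simp add: linear_diff[OF bounded_linear.linear[OF assms(1)]])
qed (use assms(2) in \<open>auto simp: ultra_kernel_def\<close>)

lemma ultra_ideal_ultra_kernel:
  fixes \<psi> :: "'a::real_normed_algebra \<Rightarrow> 'b::real_normed_algebra"
  assumes bl: "bounded_linear \<psi>" and mult: "\<And>x y. \<psi> (x * y) = \<psi> x * \<psi> y"
  shows "ultra_ideal U (ultra_kernel U \<psi>)"
  unfolding ultra_ideal_def
proof (intro conjI ballI allI impI)
  interpret bounded_linear \<psi> by fact
  note kernel_iff = ucls_in_ultra_kernel_iff[OF bl]
  show "ultra_kernel U \<psi> \<subseteq> ultrapower U"
    unfolding ultra_kernel_def ultrapower_def by auto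
  show "ucls U (\<lambda>n. 0) \<in> ultra_kernel U \<psi>"
    by (simp add: kernel_iff const_in_linf)
  fix x :: "nat \<Rightarrow> 'a" assume x: "x \<in> linf" "ucls U x \<in> ultra_kernel U \<psi>"
  then have x0: "((\<lambda>n. \<psi> (x n)) \<longlongrightarrow> 0) U" by (simp add: kernel_iff)
  show "ucls U (\<lambda>n. c *\<^sub>R x n) \<in> ultra_kernel U \<psi>" for c
    using tendsto_scaleR[OF tendsto_const x0, of c]
    by (simp add: kernel_iff linf_scaleR x(1) scaleR)
  fix y :: "nat \<Rightarrow> 'a"
  { assume y: "y \<in> linf" "ucls U y \<in> ultra_kernel U \<psi>"
    then have "((\<lambda>n. \<psi> (y n)) \<longlongrightarrow> 0) U" by (simp add: kernel_iff)
    from tendsto_add[OF x0 this]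
    show "ucls U (\<lambda>n. x n + y n) \<in> ultra_kernel U \<psi>"
      by (simp add: kernel_iff linf_add x(1) y(1) add) }
  assume y: "y \<in> linf"
  have "Bfun (\<lambda>n. \<psi> (y n)) U"
    by (rule linf_imp_Bfun[OF linf_bounded_linear_image[OF bl y]])
  from tendsto_zero_mult_Bfun[OF this x0]
  show "ucls U (\<lambda>n. y n * x n) \<in> ultra_kernel U \<psi>"
    and "ucls U (\<lambda>n. x n * y n) \<in> ultra_kernel U \<psi>"
    by (simp_all add: kernel_iff linf_mult x(1) y mult)
qed

lemma ultra_kernel_neq_ultrapower:
  assumes "U \<noteq> bot" and "bounded_linear \<psi>" and "\<psi> b \<noteq> 0"
  shows "ultra_kernel U \<psi> \<noteq> ultrapower U"
proof
  assume "ultra_kernel U \<psi> = ultrapower U"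
  then have "ucls U (\<lambda>n. b) \<in> ultra_kernel U \<psi>"
    by (simp add: ultrapower_def const_in_linf)
  then have "((\<lambda>n. \<psi> b) \<longlongrightarrow> 0) U"
    by (simp add: ucls_in_ultra_kernel_iff[OF assms(2)] const_in_linf)
  then show False
    using tendsto_unique[OF assms(1) tendsto_const] assms(3) by blast
qed

lemma unit_sequence_if_not_bounded_below:
  fixes \<psi> :: "'a::real_normed_vector \<Rightarrow> 'b::real_normed_vector"
  assumes lin: "linear \<psi>" and not_below: "\<not> (\<exists>c>0. \<forall>a. c * norm a \<le> norm (\<psi> a))"
  obtains a where "\<And>n. norm (a n) = 1" and "(\<lambda>n. \<psi> (a n)) \<longlonglongrightarrow> 0"
proof -
  have "\<exists>a. norm a = 1 \<and> norm (\<psi> a) \<le> inverse (real (Suc n))" for n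
  proof -
    obtain a where a: "norm (\<psi> a) < inverse (real (Suc n)) * norm a"
      using not_below by (meson not_le positive_imp_inverse_positive of_nat_0_less_iff zero_less_Suc)
    then have "a \<noteq> 0" by (auto simp: linear_0[OF lin])
    with a show ?thesis
      by (intro exI[of _ "(1 / norm a) *\<^sub>R a"])
        (simp add: linear_scale[OF lin] divide_less_eq less_imp_le)
  qed
  then obtain a where a: "\<And>n. norm (a n) = 1" "\<And>n. norm (\<psi> (a n)) \<le> inverse (real (Suc n))"
    by metis
  have "(\<lambda>n. \<psi> (a n)) \<longlonglongrightarrow> 0"
    using a(2) by (intro tendsto_0_le[OF LIMSEQ_inverse_real_of_nat, of _ 1]) (auto intro: always_eventually)
  with a(1) show ?thesis by (rule that)
qed

lemma bounded_below_if_ultra_kernel_trivial: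
  assumes "U \<noteq> bot" and "U \<le> sequentially" and bl: "bounded_linear \<psi>"
    and trivial: "ultra_kernel U \<psi> = {ucls U (\<lambda>n. 0)}"
  shows "\<exists>c>0. \<forall>a. c * norm a \<le> norm (\<psi> a)"
proof (rule ccontr)
  assume "\<not> ?thesis"
  then obtain a where a: "\<And>n. norm (a n) = 1" and "(\<lambda>n. \<psi> (a n)) \<longlonglongrightarrow> 0"
    using unit_sequence_if_not_bounded_below bounded_linear.linear[OF bl] by blast
  then have "((\<lambda>n. \<psi> (a n)) \<longlongrightarrow> 0) U"
    using filterlim_mono[OF _ order_refl assms(2)] by blast
  moreover have a_linf: "a \<in> linf" using a by (auto simp: linf_iff_norm_bounded)
  ultimately have "ucls U a \<in> ultra_kernel U \<psi>"
    by (simp add: ucls_in_ultra_kernel_iff[OF bl])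
  then have "ucls U a = ucls U (\<lambda>n. 0)"
    using trivial by simp
  then have "((\<lambda>n. 0 - a n) \<longlongrightarrow> 0) U"
    using ucls_eq_imp_tendsto_diff[OF a_linf] by blast
  then have "((\<lambda>n. norm (0 - a n)) \<longlongrightarrow> 0) U" by (rule tendsto_norm_zero)
  then have "((\<lambda>n. 1::real) \<longlongrightarrow> 0) U" using a by simp
  then show False using tendsto_unique[OF assms(1) tendsto_const] by fastforce
qed

theorem proposition2p9:
  fixes U :: "nat filter"
  assumes "is_ultrafilter U" and "non_principal U"
    and "ultrapower_simple U TYPE('a::{real_normed_algebra, banach})"
  shows "\<forall>\<psi> :: 'a \<Rightarrow> 'b::{real_normed_algebra, banach}.
           linear \<psi> \<and> (\<forall>x y. \<psi> (x * y) = \<psi> x * \<psi> y) \<and> continuous_on UNIV \<psi> \<and> \<psi> \<noteq> (\<lambda>x. 0)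
           \<longrightarrow> (\<exists>c>0. \<forall>a. norm (\<psi> a) \<ge> c * norm a)"
proof (intro allI impI, elim conjE)
  fix \<psi> :: "'a \<Rightarrow> 'b"
  assume lin: "linear \<psi>" and mult: "\<forall>x y. \<psi> (x * y) = \<psi> x * \<psi> y"
    and cont: "continuous_on UNIV \<psi>" and nonzero: "\<psi> \<noteq> (\<lambda>x. 0)"
  have bl: "bounded_linear \<psi>" using lin cont by (rule linear_continuous_imp_bounded_linear)
  obtain b where "\<psi> b \<noteq> 0" using nonzero by blast
  have U_proper: "U \<noteq> bot" using assms(1) by (simp add: is_ultrafilter_def)
  have "ultra_ideal U (ultra_kernel U \<psi>)"
    using bl mult by (simp add: ultra_ideal_ultra_kernel)
  moreover have "ultra_kernel U \<psi> \<noteq> ultrapower U"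
    using U_proper bl \<open>\<psi> b \<noteq> 0\<close> by (rule ultra_kernel_neq_ultrapower)
  ultimately have "ultra_kernel U \<psi> = {ucls U (\<lambda>n. 0)}"
    using assms(3) by (auto simp: ultrapower_simple_def)
  with U_proper nonprincipal_ultrafilter_le_sequentially[OF assms(1,2)] bl
  show "\<exists>c>0. \<forall>a. norm (\<psi> a) \<ge> c * norm a"
    by (rule bounded_below_if_ultra_kernel_trivial)
qed

end
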